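(* Let $\Omega\subset\mathbb{R}^n$ be open and bounded, $m>n$, $Y^m\subset\mathbb{R}^m$ a parallelotope, $1<p<\infty$, and let $\mathbf{R}\in\mathbb{R}^{m\times n}$ satisfy $\mathbf{R}^*k\neq0$ for all $k\in\mathbb{Z}^m\setminus\{0\}$. Let $f:\Omega\times\mathbb{R}^m\times\mathbb{R}^d\to[0,\infty)$ be continuous and $Y^m$-periodic in its second variable, set $f_R(x,z,\xi):=f(x,\mathbf{R}z,\xi)$, and assume there is $C>0$ with $0\le f_R(x,z,\xi)\le C(1+|\xi|^p)$ for all $(x,z,\xi)\in\Omega\times\mathbb{R}^n\times\mathbb{R}^d$. Let $\{\varepsilon_n\}\subset(0,\infty)$ converge to $0$, and let $\{u_n\},\{w_n\}\subset L^p(\Omega;\mathbb{R}^d)$ be $p$-equiintegrable sequences with $\lim_{n\to\infty}\|u_n-w_n\|_{L^p(\Omega;\mathbb{R}^d)}=0$. Then $$\lim_{n\to\infty}\int_\Omega\Big[f_R\Big(x,\frac{x}{\varepsilon_n},u_n(x)\Big)-f_R\Big(x,\frac{x}{\varepsilon_n},w_n(x)\Big)\Big]\,dx=0.$$ *)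

theory Defs
  imports "HOL-Analysis.Analysis"
begin

definition parallelotope_rep :: "real^'m \<Rightarrow> real^'m^'m \<Rightarrow> (real^'m) set" where
  "parallelotope_rep y0 A = {y0 + A *v t | t. \<forall>i. 0 \<le> t$i \<and> t$i < 1}"

definition is_parallelotope :: "(real^'m) set \<Rightarrow> bool" where
  "is_parallelotope Y \<longleftrightarrow> (\<exists>y0 A. invertible A \<and> Y = parallelotope_rep y0 A)"

text \<open>Y-periodicity: invariance under translation by each edge vector of the
  parallelotope Y (hence by the whole lattice generated by them).\<close>
definition periodic_wrt :: "(real^'m) set \<Rightarrow> (real^'m \<Rightarrow> 'b) \<Rightarrow> bool" where
  "periodic_wrt Y g \<longleftrightarrow>
     (\<forall>y0 A. invertible A \<and> Y = parallelotope_rep y0 A \<longrightarrow>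
        (\<forall>z i. g (z + A *v axis i 1) = g z))"

definition in_Lp :: "(real^'n) set \<Rightarrow> real \<Rightarrow> (real^'n \<Rightarrow> real^'d) \<Rightarrow> bool" where
  "in_Lp \<Omega> p u \<longleftrightarrow> u \<in> borel_measurable (lebesgue_on \<Omega>) \<and>
     integrable (lebesgue_on \<Omega>) (\<lambda>x. norm (u x) powr p)"

definition Lp_norm :: "(real^'n) set \<Rightarrow> real \<Rightarrow> (real^'n \<Rightarrow> real^'d) \<Rightarrow> real" where
  "Lp_norm \<Omega> p u = (integral\<^sup>L (lebesgue_on \<Omega>) (\<lambda>x. norm (u x) powr p)) powr (1 / p)"

definition p_equiintegrable :: "(real^'n) set \<Rightarrow> real \<Rightarrow> (nat \<Rightarrow> real^'n \<Rightarrow> real^'d) \<Rightarrow> bool" where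
  "p_equiintegrable \<Omega> p U \<longleftrightarrow>
     (\<forall>e>0. \<exists>\<delta>>0. \<forall>E. E \<in> sets lebesgue \<and> E \<subseteq> \<Omega> \<and> measure lebesgue E < \<delta> \<longrightarrow>
        (\<forall>k. integral\<^sup>L (lebesgue_on E) (\<lambda>x. norm (U k x) powr p) < e))"

end

theory Submission
  imports Defs
begin

(*
  By periodicity, f x z \<xi> depends on z only modulo the lattice of Y, so z can be confined to a
  compact cell; hence f is uniformly continuous in \<xi>, uniformly in the fast variable z, for x in a
  compact K \<subseteq> \<Omega> and |\<xi>| \<le> b. The two integrands therefore differ by little outside the exceptional
  set where x \<notin> K, |u_k| \<ge> b, |w_k| \<ge> b or |u_k - w_k| \<ge> \<eta>. Inner regularity, Chebyshev's
  inequality for the L^p bound that equiintegrability gives on bounded \<Omega>, and the convergence in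
  measure of u_k - w_k make this set eventually small, and on it the growth bound together with
  p-equiintegrability makes the integrals small.
*)

section \<open>Periodic integrands\<close>

lemma periodic_int_multiple:
  fixes g :: "'a::real_vector \<Rightarrow> 'b"
  assumes "\<And>z. g (z + a) = g z"
  shows "g (z + of_int j *\<^sub>R a) = g z"
proof (induction j rule: int_induct[where k = 0])
  case (step1 i)
  have "z + of_int (i + 1) *\<^sub>R a = (z + of_int i *\<^sub>R a) + a" by (simp add: algebra_simps)
  then show ?case using assms step1 by metis
next
  case (step2 i)
  have "z + of_int i *\<^sub>R a = (z + of_int (i - 1) *\<^sub>R a) + a" by (simp add: algebra_simps)
  then show ?case using assms step2 by metis
qed simp

lemma periodic_int_combination:
  fixes g :: "'a::real_vector \<Rightarrow> 'b"
  assumes "finite S" "\<And>i z. i \<in> S \<Longrightarrow> g (z + a i) = g z" "\<And>i. i \<in> S \<Longrightarrow> c i \<in> \<int>"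
  shows "g (z + (\<Sum>i\<in>S. c i *\<^sub>R a i)) = g z"
  using assms
proof (induction S arbitrary: z rule: finite_induct)
  case (insert i S)
  obtain j where "c i = of_int j" using insert.prems(2) by (auto elim: Ints_cases)
  then have "g (z + (\<Sum>i\<in>insert i S. c i *\<^sub>R a i))
      = g ((z + (\<Sum>i\<in>S. c i *\<^sub>R a i)) + of_int j *\<^sub>R a i)"
    using insert.hyps by (simp add: algebra_simps)
  also have "\<dots> = g z"
    using periodic_int_multiple[of g "a i"] insert by simp
  finally show ?case .
qed simp

lemma periodic_wrt_lattice:
  assumes "periodic_wrt Y g" "invertible A" "Y = parallelotope_rep y0 A" "\<forall>i. v $ i \<in> \<int>"
  shows "g (z + A *v v) = g z"
proof -
  have "A *v v = (\<Sum>i\<in>UNIV. v $ i *\<^sub>R (A *v axis i 1))"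
    by (subst basis_expansion[of v, symmetric])
       (simp add: linear_sum[OF matrix_vector_mul_linear] scalar_mult_eq_scaleR
          matrix_vector_mult_scaleR)
  moreover have "g (z + A *v axis i 1) = g z" for i z
    using assms(1-3) unfolding periodic_wrt_def by blast
  ultimately show ?thesis
    using periodic_int_combination[of UNIV g "\<lambda>i. A *v axis i 1" "\<lambda>i. v $ i"] assms(4) by simp
qed

lemma parallelotope_periodic_representative:
  assumes "is_parallelotope Y"
  obtains P :: "(real^'m) set" where "compact P"
    and "\<And>z. \<exists>z'\<in>P. \<forall>g :: real^'m \<Rightarrow> 'b. periodic_wrt Y g \<longrightarrow> g z = g z'"
proof -
  obtain y0 A where A: "invertible A" "Y = parallelotope_rep y0 A"
    using assms unfolding is_parallelotope_def by blast
  then obtain A' where AA': "A ** A' = mat 1" unfolding invertible_def by blast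
  define P where "P = (\<lambda>t. y0 + A *v t) ` cbox 0 (\<chi> i. 1)"
  have "compact P" unfolding P_def
    by (intro compact_continuous_image compact_cbox continuous_intros)
  moreover have "\<exists>z'\<in>P. \<forall>g :: real^'m \<Rightarrow> 'b. periodic_wrt Y g \<longrightarrow> g z = g z'" for z
  proof -
    define t where "t = A' *v (z - y0)"
    define v :: "real^'m" where "v = (\<chi> i. of_int \<lfloor>t $ i\<rfloor>)"
    define z' where "z' = y0 + A *v (t - v)"
    have "A *v t = z - y0" unfolding t_def by (simp add: matrix_vector_mul_assoc AA')
    then have z: "z = z' + A *v v" unfolding z'_def by (simp add: matrix_vector_mult_diff_distrib)
    have "t - v \<in> cbox 0 (\<chi> i. 1)"
      unfolding v_def by (auto simp: mem_box_cart intro: less_imp_le frac_lt_1[unfolded frac_def])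
    then have "z' \<in> P" unfolding P_def z'_def by blast
    moreover have "\<forall>i. v $ i \<in> \<int>" unfolding v_def by simp
    ultimately show ?thesis using periodic_wrt_lattice[OF _ A] z by metis
  qed
  ultimately show ?thesis using that by blast
qed

lemma periodic_uniformly_continuous_last_arg:
  fixes f :: "'a::euclidean_space \<Rightarrow> real^'m \<Rightarrow> 'c::euclidean_space \<Rightarrow> real"
  assumes "is_parallelotope Y" and f_cont: "continuous_on (\<Omega> \<times> UNIV \<times> UNIV) (\<lambda>(x, z, \<xi>). f x z \<xi>)"
    and f_per: "\<forall>x\<in>\<Omega>. \<forall>\<xi>. periodic_wrt Y (\<lambda>z. f x z \<xi>)"
    and "compact K" "K \<subseteq> \<Omega>" "e > 0"
  obtains \<eta> where "\<eta> > 0" "\<And>x z \<xi> \<xi>'. x \<in> K \<Longrightarrow> norm \<xi> \<le> b \<Longrightarrow> norm \<xi>' \<le> b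
     \<Longrightarrow> dist \<xi> \<xi>' < \<eta> \<Longrightarrow> \<bar>f x z \<xi> - f x z \<xi>'\<bar> < e"
proof -
  obtain P :: "(real^'m) set" where "compact P"
    and P: "\<And>z. \<exists>z'\<in>P. \<forall>g :: real^'m \<Rightarrow> real. periodic_wrt Y g \<longrightarrow> g z = g z'"
    using parallelotope_periodic_representative[OF assms(1)] by blast
  let ?S = "K \<times> P \<times> cball (0::'c) b"
  let ?F = "\<lambda>(x, z, \<xi>). f x z \<xi>"
  have "compact ?S" using \<open>compact K\<close> \<open>compact P\<close> by (intro compact_Times compact_cball)
  moreover have "continuous_on ?S ?F" by (rule continuous_on_subset[OF f_cont]) (use assms in auto)
  ultimately have "uniformly_continuous_on ?S ?F" using compact_uniformly_continuous by blast
  then obtain \<eta> where "\<eta> > 0" and \<eta>: "\<forall>a\<in>?S. \<forall>a'\<in>?S. dist a' a < \<eta> \<longrightarrow> dist (?F a') (?F a) < e"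
    unfolding uniformly_continuous_on_def using \<open>e > 0\<close> by metis
  show thesis
  proof (rule that[OF \<open>\<eta> > 0\<close>])
    fix x z and \<xi> \<xi>' :: 'c
    assume x: "x \<in> K" and \<xi>: "norm \<xi> \<le> b" "norm \<xi>' \<le> b" "dist \<xi> \<xi>' < \<eta>"
    obtain z' where "z' \<in> P" and z': "\<forall>g :: real^'m \<Rightarrow> real. periodic_wrt Y g \<longrightarrow> g z = g z'"
      using P by blast
    have "x \<in> \<Omega>" using x \<open>K \<subseteq> \<Omega>\<close> by blast
    then have "f x z \<xi> = f x z' \<xi>" "f x z \<xi>' = f x z' \<xi>'" using z' f_per by blast+
    moreover have "dist (x, z', \<xi>) (x, z', \<xi>') < \<eta>" using \<xi> by (simp add: dist_Pair_Pair)
    ultimately show "\<bar>f x z \<xi> - f x z \<xi>'\<bar> < e"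
      using \<eta> x \<xi> \<open>z' \<in> P\<close> by (fastforce simp: dist_real_def)
  qed
qed

lemma continuous_compose_borel_measurable_lebesgue_on:
  fixes f :: "'a::euclidean_space \<Rightarrow> 'b::euclidean_space \<Rightarrow> 'c::euclidean_space \<Rightarrow> real"
  assumes "open \<Omega>" "continuous_on (\<Omega> \<times> UNIV \<times> UNIV) (\<lambda>(x, z, \<xi>). f x z \<xi>)"
    and "y \<in> borel_measurable (lebesgue_on \<Omega>)" "v \<in> borel_measurable (lebesgue_on \<Omega>)"
  shows "(\<lambda>x. f x (y x) (v x)) \<in> borel_measurable (lebesgue_on \<Omega>)"
proof -
  define F where "F q = (if q \<in> \<Omega> \<times> UNIV \<times> UNIV then case_prod (\<lambda>x (z, \<xi>). f x z \<xi>) q else 0)"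
    for q :: "'a \<times> 'b \<times> 'c"
  have "F \<in> borel_measurable borel" unfolding F_def
    by (rule borel_measurable_continuous_on_if) (use assms in \<open>auto intro: borel_open open_Times\<close>)
  moreover have "(\<lambda>x. (x, y x, v x)) \<in> borel_measurable (lebesgue_on \<Omega>)"
  proof -
    have "(\<lambda>x. x) \<in> borel_measurable (lebesgue_on \<Omega>)"
      using assms(1) by (intro continuous_imp_measurable_on_sets_lebesgue continuous_on_id) auto
    then show ?thesis
      unfolding borel_prod[symmetric] using assms(3,4) by (intro measurable_Pair) auto
  qed
  ultimately have "(\<lambda>x. F (x, y x, v x)) \<in> borel_measurable (lebesgue_on \<Omega>)"
    using measurable_compose by blast
  then show ?thesis by (rule measurable_cong[THEN iffD1, rotated]) (simp add: F_def)
qed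

section \<open>Integrals of p-th powers\<close>

lemma lebesgue_on_subset:
  fixes g :: "'a::euclidean_space \<Rightarrow> real"
  assumes "\<Omega> \<in> sets lebesgue" "E \<in> sets lebesgue" "E \<subseteq> \<Omega>"
  shows integrable_lebesgue_on_subset:
      "integrable (lebesgue_on E) g \<longleftrightarrow> integrable (lebesgue_on \<Omega>) (\<lambda>x. indicator E x * g x)"
    and integral_lebesgue_on_subset:
      "integral\<^sup>L (lebesgue_on E) g = (\<integral>x. indicator E x * g x \<partial>lebesgue_on \<Omega>)"
proof -
  have E: "E \<inter> space (lebesgue_on \<Omega>) \<in> sets (lebesgue_on \<Omega>)"
    using assms by (simp add: sets_restrict_space_iff Int_absorb2)
  have "lebesgue_on E = restrict_space (lebesgue_on \<Omega>) E"
    using assms by (simp add: restrict_restrict_space Int_absorb1)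
  then show "integrable (lebesgue_on E) g \<longleftrightarrow> integrable (lebesgue_on \<Omega>) (\<lambda>x. indicator E x * g x)"
    and "integral\<^sup>L (lebesgue_on E) g = (\<integral>x. indicator E x * g x \<partial>lebesgue_on \<Omega>)"
    using integrable_restrict_space[OF E, of g] integral_restrict_space[OF E, of g] by simp_all
qed

lemma integrable_lebesgue_on_mono:
  fixes g :: "'a::euclidean_space \<Rightarrow> real"
  assumes "integrable (lebesgue_on \<Omega>) g" "\<Omega> \<in> sets lebesgue" "E \<in> sets lebesgue" "E \<subseteq> \<Omega>"
  shows "integrable (lebesgue_on E) g"
  using integrable_mult_indicator[OF _ assms(1), of E] assms(2-4)
    integrable_lebesgue_on_subset[OF assms(2-4), of g]
  by (simp add: sets_restrict_space_iff)

lemma superlevel_set_lebesgue_on: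
  fixes g :: "'a::euclidean_space \<Rightarrow> real"
  assumes "\<Omega> \<in> sets lebesgue" "g \<in> borel_measurable (lebesgue_on \<Omega>)"
  shows "{x \<in> \<Omega>. c \<le> g x} \<in> sets lebesgue"
proof -
  have "{x \<in> space (lebesgue_on \<Omega>). c \<le> g x} \<in> sets (lebesgue_on \<Omega>)"
    using assms(2) by measurable
  then show ?thesis using assms(1) by (simp add: sets_restrict_space_iff)
qed

lemma lebesgue_inner_compact:
  fixes \<Omega> :: "'a::euclidean_space set"
  assumes "\<Omega> \<in> sets lebesgue" "bounded \<Omega>" "0 < \<epsilon>"
  obtains T where "compact T" "T \<subseteq> \<Omega>" "measure lebesgue (\<Omega> - T) < \<epsilon>"
proof -
  obtain T where "closed T" "T \<subseteq> \<Omega>" "\<Omega> - T \<in> lmeasurable"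
    and "emeasure lebesgue (\<Omega> - T) < ennreal \<epsilon>"
    using sets_lebesgue_inner_closed[OF assms(1,3)] by blast
  moreover have "compact T"
    using \<open>closed T\<close> \<open>T \<subseteq> \<Omega>\<close> assms(2) by (meson bounded_subset compact_eq_bounded_closed)
  ultimately show thesis
    using that by (simp add: emeasure_eq_measure2 ennreal_less_iff)
qed

lemma in_Lp_Markov_inequality:
  assumes "\<Omega> \<in> sets lebesgue" "in_Lp \<Omega> p v" "0 < p" "0 < b"
  shows "measure lebesgue {x \<in> \<Omega>. b \<le> norm (v x)}
           \<le> integral\<^sup>L (lebesgue_on \<Omega>) (\<lambda>x. norm (v x) powr p) / b powr p"
proof -
  have v: "v \<in> borel_measurable (lebesgue_on \<Omega>)"
    and int: "integrable (lebesgue_on \<Omega>) (\<lambda>x. norm (v x) powr p)"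
    using assms(2) unfolding in_Lp_def by auto
  have "b \<le> t \<longleftrightarrow> b powr p \<le> t powr p" if "0 \<le> t" for t :: real
    using that assms(3,4) powr_mono2[of p b t] powr_less_mono2[of p t b] by linarith
  then have S: "{x \<in> \<Omega>. b \<le> norm (v x)} = {x \<in> space (lebesgue_on \<Omega>). b powr p \<le> norm (v x) powr p}"
    by auto
  have "measure lebesgue {x \<in> \<Omega>. b \<le> norm (v x)} = measure (lebesgue_on \<Omega>) {x \<in> \<Omega>. b \<le> norm (v x)}"
    using assms(1) by (intro measure_restrict_space[symmetric]) auto
  also have "\<dots> = measure (lebesgue_on \<Omega>) {x \<in> space (lebesgue_on \<Omega>). b powr p \<le> norm (v x) powr p}"
    unfolding S ..
  also have "\<dots> \<le> integral\<^sup>L (lebesgue_on \<Omega>) (\<lambda>x. norm (v x) powr p) / b powr p"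
    using assms(4) by (intro integral_Markov_inequality_measure[OF int sets.top]) auto
  finally show ?thesis .
qed

lemma powr_le_two_powr_sum:
  fixes a b c p :: real
  assumes "0 \<le> a" "0 \<le> b" "0 \<le> c" "c \<le> a + b" "0 < p"
  shows "c powr p \<le> 2 powr p * (a powr p + b powr p)"
proof -
  have "c powr p \<le> (2 * max a b) powr p" using assms by (intro powr_mono2) auto
  also have "\<dots> = 2 powr p * max a b powr p" using assms by (simp add: powr_mult)
  also have "max a b powr p \<le> a powr p + b powr p" by (simp add: max_def)
  finally show ?thesis by simp
qed

lemma in_Lp_diff:
  assumes "in_Lp \<Omega> p u" "in_Lp \<Omega> p w" "0 < p"
  shows "in_Lp \<Omega> p (\<lambda>x. u x - w x)"
  unfolding in_Lp_def
proof
  show meas: "(\<lambda>x. u x - w x) \<in> borel_measurable (lebesgue_on \<Omega>)"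
    using assms unfolding in_Lp_def by auto
  show "integrable (lebesgue_on \<Omega>) (\<lambda>x. norm (u x - w x) powr p)"
  proof (rule Bochner_Integration.integrable_bound)
    show "integrable (lebesgue_on \<Omega>) (\<lambda>x. 2 powr p * (norm (u x) powr p + norm (w x) powr p))"
      using assms unfolding in_Lp_def by auto
    show "AE x in lebesgue_on \<Omega>. norm (norm (u x - w x) powr p)
            \<le> norm (2 powr p * (norm (u x) powr p + norm (w x) powr p))"
      using powr_le_two_powr_sum[OF _ _ _ norm_triangle_ineq4 \<open>0 < p\<close>] by (intro AE_I2) simp
  qed (use meas in measurable)
qed

lemma Lp_norm_tendsto_zero_imp_tendsto_in_measure:
  assumes "\<Omega> \<in> sets lebesgue" "0 < p" and v: "\<forall>k. in_Lp \<Omega> p (v k)"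
    and lim: "(\<lambda>k. Lp_norm \<Omega> p (v k)) \<longlonglongrightarrow> 0" and "0 < \<eta>"
  shows "(\<lambda>k. measure lebesgue {x \<in> \<Omega>. \<eta> \<le> norm (v k x)}) \<longlonglongrightarrow> 0"
proof (rule Lim_null_comparison)
  define I where "I k = integral\<^sup>L (lebesgue_on \<Omega>) (\<lambda>x. norm (v k x) powr p)" for k
  have "I k = Lp_norm \<Omega> p (v k) powr p" for k
    using \<open>0 < p\<close> integral_nonneg_AE[of "\<lambda>x. norm (v k x) powr p"]
    by (simp add: Lp_norm_def I_def powr_powr)
  moreover have "(\<lambda>k. Lp_norm \<Omega> p (v k) powr p) \<longlonglongrightarrow> 0"
    using lim \<open>0 < p\<close> by (intro tendsto_zero_powrI) (auto simp: Lp_norm_def)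
  ultimately show "(\<lambda>k. I k / \<eta> powr p) \<longlonglongrightarrow> 0"
    by (simp add: tendsto_divide_zero)
  show "\<forall>\<^sub>F k in sequentially. norm (measure lebesgue {x \<in> \<Omega>. \<eta> \<le> norm (v k x)}) \<le> I k / \<eta> powr p"
    using in_Lp_Markov_inequality[OF assms(1) _ \<open>0 < p\<close> \<open>0 < \<eta>\<close>] v
    by (auto simp: I_def intro!: always_eventually)
qed

lemma bounded_covered_by_small_boxes:
  fixes \<Omega> :: "'a::euclidean_space set"
  assumes "bounded \<Omega>" "0 < \<delta>"
  obtains \<B> where "finite \<B>" "\<And>B. B \<in> \<B> \<Longrightarrow> B \<in> lmeasurable \<and> measure lebesgue B < \<delta>"
    "\<Omega> \<subseteq> \<Union>\<B>"
proof -
  define \<rho> where "\<rho> = min (1/4) (\<delta>/4)"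
  have \<rho>: "0 < \<rho>" "2 * \<rho> \<le> 1" "2 * \<rho> < \<delta>" using assms unfolding \<rho>_def by auto
  define bx where "bx x = box (x - \<rho> *\<^sub>R One) (x + \<rho> *\<^sub>R One)" for x :: 'a
  have small: "measure lebesgue (bx x) < \<delta>" for x
  proof -
    have "measure lebesgue (bx x) = (2 * \<rho>) ^ DIM('a)"
      unfolding bx_def using \<rho> by (simp add: measure_lborel_box_eq algebra_simps inner_simps)
    also have "\<dots> \<le> 2 * \<rho>" using \<rho> power_decreasing[of 1 "DIM('a)" "2 * \<rho>"] DIM_positive by simp
    finally show ?thesis using \<rho> by simp
  qed
  have "closure \<Omega> \<subseteq> \<Union>(bx ` closure \<Omega>)"
    using \<rho> by (force simp: bx_def mem_box inner_simps)
  moreover have "compact (closure \<Omega>)" using assms(1) by (simp add: compact_closure)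
  ultimately obtain C where "C \<subseteq> closure \<Omega>" "finite C" "closure \<Omega> \<subseteq> \<Union>(bx ` C)"
    by (metis compactE_image open_box bx_def)
  moreover have "bx x \<in> lmeasurable" for x unfolding bx_def by simp
  ultimately show thesis
    using that[of "bx ` C"] small closure_subset[of \<Omega>] by blast
qed

lemma p_equiintegrable_integral_bounded:
  assumes \<Omega>: "\<Omega> \<in> sets lebesgue" "bounded \<Omega>"
    and u: "\<forall>k. in_Lp \<Omega> p (u k)" and "p_equiintegrable \<Omega> p u"
  obtains B where "\<And>k. integral\<^sup>L (lebesgue_on \<Omega>) (\<lambda>x. norm (u k x) powr p) \<le> B"
proof -
  define G where "G k x = norm (u k x) powr p" for k x
  obtain \<delta> where "0 < \<delta>" and small: "\<And>E k. E \<in> sets lebesgue \<Longrightarrow> E \<subseteq> \<Omega> \<Longrightarrow> measure lebesgue E < \<delta>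
      \<Longrightarrow> integral\<^sup>L (lebesgue_on E) (G k) < 1"
    using assms(4) unfolding p_equiintegrable_def G_def by (meson zero_less_one)
  obtain \<B> where "finite \<B>" and \<B>: "\<And>B. B \<in> \<B> \<Longrightarrow> B \<in> lmeasurable \<and> measure lebesgue B < \<delta>"
    and cover: "\<Omega> \<subseteq> \<Union>\<B>"
    using bounded_covered_by_small_boxes[OF \<Omega>(2) \<open>0 < \<delta>\<close>] by blast
  have piece: "\<Omega> \<inter> B \<in> sets lebesgue" "measure lebesgue (\<Omega> \<inter> B) < \<delta>" if "B \<in> \<B>" for B
    using \<B>[OF that] \<Omega>(1) measure_mono_fmeasurable[of "\<Omega> \<inter> B" B lebesgue]
    by (auto simp: fmeasurableD)
  have G: "integrable (lebesgue_on \<Omega>) (G k)" "\<And>x. 0 \<le> G k x" for k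
    using u unfolding in_Lp_def G_def by auto
  have Gi: "integrable (lebesgue_on \<Omega>) (\<lambda>x. indicator (\<Omega> \<inter> B) x * G k x)" if "B \<in> \<B>" for B k
    using integrable_mult_indicator[OF _ G(1)] piece(1)[OF that] \<Omega>(1)
    by (simp add: sets_restrict_space_iff)
  have "integral\<^sup>L (lebesgue_on \<Omega>) (G k) \<le> real (card \<B>)" for k
  proof -
    have "integral\<^sup>L (lebesgue_on \<Omega>) (G k)
        \<le> (\<integral>x. (\<Sum>B\<in>\<B>. indicator (\<Omega> \<inter> B) x * G k x) \<partial>lebesgue_on \<Omega>)"
    proof (rule integral_mono[OF G(1)])
      show "integrable (lebesgue_on \<Omega>) (\<lambda>x. \<Sum>B\<in>\<B>. indicator (\<Omega> \<inter> B) x * G k x)"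
        using Gi by (intro Bochner_Integration.integrable_sum) auto
      fix x assume "x \<in> space (lebesgue_on \<Omega>)"
      then obtain B0 where "B0 \<in> \<B>" "x \<in> \<Omega> \<inter> B0" using cover by auto
      then show "G k x \<le> (\<Sum>B\<in>\<B>. indicator (\<Omega> \<inter> B) x * G k x)"
        using member_le_sum[of B0 \<B> "\<lambda>B. indicator (\<Omega> \<inter> B) x * G k x"] \<open>finite \<B>\<close> G(2)
        by (simp add: indicator_def)
    qed
    also have "\<dots> = (\<Sum>B\<in>\<B>. integral\<^sup>L (lebesgue_on (\<Omega> \<inter> B)) (G k))"
      using Gi by (simp add: integral_lebesgue_on_subset[OF \<Omega>(1) piece(1)])
    also have "\<dots> \<le> (\<Sum>B\<in>\<B>. 1)"
      using small piece by (intro sum_mono less_imp_le) auto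
    finally show ?thesis by simp
  qed
  then show thesis using that unfolding G_def by blast
qed

lemma p_equiintegrable_tight:
  assumes "\<Omega> \<in> sets lebesgue" "bounded \<Omega>" "0 < p"
    and u: "\<forall>k. in_Lp \<Omega> p (u k)" and "p_equiintegrable \<Omega> p u" and "0 < \<delta>"
  obtains b where "\<And>k b'. b \<le> b' \<Longrightarrow> measure lebesgue {x \<in> \<Omega>. b' \<le> norm (u k x)} < \<delta>"
  \<comment> \<open>Stated for all thresholds above b, so that one threshold can serve several sequences.\<close>
proof -
  obtain B where B: "\<And>k. integral\<^sup>L (lebesgue_on \<Omega>) (\<lambda>x. norm (u k x) powr p) \<le> B"
    using p_equiintegrable_integral_bounded[OF assms(1,2) u assms(5)] by blast
  define b where "b = ((\<bar>B\<bar> + 1) / \<delta>) powr (1 / p)"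
  have "0 < b" using \<open>0 < \<delta>\<close> by (simp add: b_def)
  have bp: "b powr p = (\<bar>B\<bar> + 1) / \<delta>" using \<open>0 < \<delta>\<close> \<open>0 < p\<close> by (simp add: b_def powr_powr)
  have "measure lebesgue {x \<in> \<Omega>. b' \<le> norm (u k x)} < \<delta>" if "b \<le> b'" for k b'
  proof -
    have "0 < b'" using \<open>0 < b\<close> that by linarith
    have "measure lebesgue {x \<in> \<Omega>. b' \<le> norm (u k x)}
        \<le> integral\<^sup>L (lebesgue_on \<Omega>) (\<lambda>x. norm (u k x) powr p) / b' powr p"
      using in_Lp_Markov_inequality[OF assms(1) _ \<open>0 < p\<close> \<open>0 < b'\<close>] u by blast
    also have "\<dots> \<le> \<bar>B\<bar> / b' powr p" using B[of k] \<open>0 < b'\<close> by (simp add: divide_right_mono)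
    also have "\<dots> \<le> \<bar>B\<bar> / b powr p"
      using \<open>0 < b\<close> \<open>0 < p\<close> that by (intro divide_left_mono powr_mono2) auto
    also have "\<dots> < \<delta>" using \<open>0 < \<delta>\<close> unfolding bp by (simp add: field_simps)
    finally show ?thesis .
  qed
  then show thesis using that by blast
qed

lemma p_equiintegrable_common_delta:
  assumes "p_equiintegrable \<Omega> p u" "p_equiintegrable \<Omega> p w" "0 < e"
  obtains \<delta> where "0 < \<delta>" "\<And>E k. E \<in> sets lebesgue \<Longrightarrow> E \<subseteq> \<Omega> \<Longrightarrow> measure lebesgue E < \<delta>
      \<Longrightarrow> integral\<^sup>L (lebesgue_on E) (\<lambda>x. norm (u k x) powr p) < e
        \<and> integral\<^sup>L (lebesgue_on E) (\<lambda>x. norm (w k x) powr p) < e"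
proof -
  obtain \<delta>u where "0 < \<delta>u" and hu: "\<forall>E. E \<in> sets lebesgue \<and> E \<subseteq> \<Omega> \<and> measure lebesgue E < \<delta>u
      \<longrightarrow> (\<forall>k. integral\<^sup>L (lebesgue_on E) (\<lambda>x. norm (u k x) powr p) < e)"
    using assms(1,3) unfolding p_equiintegrable_def by blast
  obtain \<delta>w where "0 < \<delta>w" and hw: "\<forall>E. E \<in> sets lebesgue \<and> E \<subseteq> \<Omega> \<and> measure lebesgue E < \<delta>w
      \<longrightarrow> (\<forall>k. integral\<^sup>L (lebesgue_on E) (\<lambda>x. norm (w k x) powr p) < e)"
    using assms(2,3) unfolding p_equiintegrable_def by blast
  show thesis
  proof (rule that[of "min \<delta>u \<delta>w"])
    show "0 < min \<delta>u \<delta>w" using \<open>0 < \<delta>u\<close> \<open>0 < \<delta>w\<close> by simp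
  qed (use hu hw in simp_all)
qed

section \<open>Integrands equicontinuous in the last argument\<close>

lemma
  fixes u w :: "real^'n \<Rightarrow> real^'d"
  assumes \<Omega>: "\<Omega> \<in> lmeasurable" and E: "E \<in> sets lebesgue" "E \<subseteq> \<Omega>"
    and u: "in_Lp \<Omega> p u" and w: "in_Lp \<Omega> p w"
  shows integrable_growth_majorant:
      "integrable (lebesgue_on E) (\<lambda>x. 2 * C + C * norm (u x) powr p + C * norm (w x) powr p)"
    and integral_growth_majorant:
      "integral\<^sup>L (lebesgue_on E) (\<lambda>x. 2 * C + C * norm (u x) powr p + C * norm (w x) powr p)
         = 2 * C * measure lebesgue E + C * integral\<^sup>L (lebesgue_on E) (\<lambda>x. norm (u x) powr p)
           + C * integral\<^sup>L (lebesgue_on E) (\<lambda>x. norm (w x) powr p)"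
proof -
  have "\<Omega> \<in> sets lebesgue" using \<Omega> by (simp add: fmeasurableD)
  then have uE: "integrable (lebesgue_on E) (\<lambda>x. C * norm (u x) powr p)"
    and wE: "integrable (lebesgue_on E) (\<lambda>x. C * norm (w x) powr p)"
    using integrable_lebesgue_on_mono[OF _ _ E] u w unfolding in_Lp_def by auto
  have "E \<in> lmeasurable" using \<Omega> E by (metis fmeasurableI2)
  then have cE: "integrable (lebesgue_on E) (\<lambda>x. c)" for c :: real
    using finite_measure.integrable_const[OF finite_measure_lebesgue_on] by blast
  show "integrable (lebesgue_on E) (\<lambda>x. 2 * C + C * norm (u x) powr p + C * norm (w x) powr p)"
    using uE wE cE by (intro Bochner_Integration.integrable_add)
  show "integral\<^sup>L (lebesgue_on E) (\<lambda>x. 2 * C + C * norm (u x) powr p + C * norm (w x) powr p)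
      = 2 * C * measure lebesgue E + C * integral\<^sup>L (lebesgue_on E) (\<lambda>x. norm (u x) powr p)
        + C * integral\<^sup>L (lebesgue_on E) (\<lambda>x. norm (w x) powr p)"
    unfolding Bochner_Integration.integral_add[OF Bochner_Integration.integrable_add[OF cE uE] wE]
      Bochner_Integration.integral_add[OF cE uE]
    using E by (simp add: measure_restrict_space)
qed

lemma integral_abs_le_outside_exceptional_set:
  fixes h g :: "'a::euclidean_space \<Rightarrow> real"
  assumes "\<Omega> \<in> lmeasurable" "E \<in> sets lebesgue" "E \<subseteq> \<Omega>" "0 \<le> e"
    and "integrable (lebesgue_on \<Omega>) h" "integrable (lebesgue_on E) g"
    and "\<And>x. x \<in> \<Omega> - E \<Longrightarrow> \<bar>h x\<bar> \<le> e" "\<And>x. x \<in> E \<Longrightarrow> \<bar>h x\<bar> \<le> g x"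
  shows "\<bar>integral\<^sup>L (lebesgue_on \<Omega>) h\<bar> \<le> e * measure lebesgue \<Omega> + integral\<^sup>L (lebesgue_on E) g"
proof -
  have \<Omega>: "\<Omega> \<in> sets lebesgue" using assms(1) by (simp add: fmeasurableD)
  have const: "integrable (lebesgue_on \<Omega>) (\<lambda>x. e)"
    using finite_measure.integrable_const[OF finite_measure_lebesgue_on[OF assms(1)]] .
  have gE: "integrable (lebesgue_on \<Omega>) (\<lambda>x. indicator E x * g x)"
    using assms(6) integrable_lebesgue_on_subset[OF \<Omega> assms(2,3)] by simp
  have "\<bar>integral\<^sup>L (lebesgue_on \<Omega>) h\<bar> \<le> (\<integral>x. e + indicator E x * g x \<partial>lebesgue_on \<Omega>)"
  proof (rule integral_abs_bound_integral[OF assms(5)])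
    show "\<bar>h x\<bar> \<le> e + indicator E x * g x" if "x \<in> space (lebesgue_on \<Omega>)" for x
      using that assms(4) assms(7,8)[of x] by (cases "x \<in> E") auto
  qed (use const gE in auto)
  also have "\<dots> = e * measure lebesgue \<Omega> + integral\<^sup>L (lebesgue_on E) g"
    using const gE \<Omega>
    by (simp add: integral_lebesgue_on_subset[OF \<Omega> assms(2,3)] measure_restrict_space)
  finally show ?thesis .
qed

definition exceptional_set ::
    "'a set \<Rightarrow> 'a set \<Rightarrow> real \<Rightarrow> real \<Rightarrow> ('a \<Rightarrow> 'b::real_normed_vector) \<Rightarrow> ('a \<Rightarrow> 'b) \<Rightarrow> 'a set" where
  "exceptional_set \<Omega> T b \<eta> u w = (\<Omega> - T) \<union> {x \<in> \<Omega>. b \<le> norm (u x)} \<union> {x \<in> \<Omega>. b \<le> norm (w x)}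
     \<union> {x \<in> \<Omega>. \<eta> \<le> norm (u x - w x)}"

lemma exceptional_set_subset: "exceptional_set \<Omega> T b \<eta> u w \<subseteq> \<Omega>"
  unfolding exceptional_set_def by auto

lemma
  fixes u w :: "'a::euclidean_space \<Rightarrow> 'b::euclidean_space"
  assumes "\<Omega> \<in> sets lebesgue" "T \<in> sets lebesgue"
    and "u \<in> borel_measurable (lebesgue_on \<Omega>)" "w \<in> borel_measurable (lebesgue_on \<Omega>)"
  shows exceptional_set_lebesgue: "exceptional_set \<Omega> T b \<eta> u w \<in> sets lebesgue"
    and measure_exceptional_set_le: "measure lebesgue (exceptional_set \<Omega> T b \<eta> u w)
      \<le> measure lebesgue (\<Omega> - T) + measure lebesgue {x \<in> \<Omega>. b \<le> norm (u x)}
        + measure lebesgue {x \<in> \<Omega>. b \<le> norm (w x)} + measure lebesgue {x \<in> \<Omega>. \<eta> \<le> norm (u x - w x)}"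
proof -
  have "\<Omega> - T \<in> sets lebesgue" "{x \<in> \<Omega>. b \<le> norm (u x)} \<in> sets lebesgue"
    "{x \<in> \<Omega>. b \<le> norm (w x)} \<in> sets lebesgue" "{x \<in> \<Omega>. \<eta> \<le> norm (u x - w x)} \<in> sets lebesgue"
    using assms by (auto intro!: superlevel_set_lebesgue_on borel_measurable_norm)
  then show "exceptional_set \<Omega> T b \<eta> u w \<in> sets lebesgue"
    and "measure lebesgue (exceptional_set \<Omega> T b \<eta> u w)
      \<le> measure lebesgue (\<Omega> - T) + measure lebesgue {x \<in> \<Omega>. b \<le> norm (u x)}
        + measure lebesgue {x \<in> \<Omega>. b \<le> norm (w x)} + measure lebesgue {x \<in> \<Omega>. \<eta> \<le> norm (u x - w x)}"
    unfolding exceptional_set_def by (auto, smt (verit) measure_Un_le sets.Un)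
qed

lemma integral_diff_le_exceptional_set:
  fixes F :: "real^'n \<Rightarrow> real^'d \<Rightarrow> real" and u w :: "real^'n \<Rightarrow> real^'d"
    and \<Omega> T :: "(real^'n) set" and b \<eta> :: real
  defines "E \<equiv> exceptional_set \<Omega> T b \<eta> u w"
  assumes \<Omega>: "\<Omega> \<in> lmeasurable" and T: "T \<in> sets lebesgue"
    and "0 < p" "0 \<le> C" "0 \<le> e"
    and u: "in_Lp \<Omega> p u" and w: "in_Lp \<Omega> p w"
    and Fu: "(\<lambda>x. F x (u x)) \<in> borel_measurable (lebesgue_on \<Omega>)"
    and Fw: "(\<lambda>x. F x (w x)) \<in> borel_measurable (lebesgue_on \<Omega>)"
    and growth: "\<And>x \<xi>. x \<in> \<Omega> \<Longrightarrow> 0 \<le> F x \<xi> \<and> F x \<xi> \<le> C * (1 + norm \<xi> powr p)"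
    and cont: "\<And>x \<xi> \<xi>'. x \<in> T \<Longrightarrow> norm \<xi> \<le> b \<Longrightarrow> norm \<xi>' \<le> b \<Longrightarrow> dist \<xi> \<xi>' < \<eta>
                 \<Longrightarrow> \<bar>F x \<xi> - F x \<xi>'\<bar> < e"
  shows "\<bar>\<integral>x. F x (u x) - F x (w x) \<partial>lebesgue_on \<Omega>\<bar>
           \<le> e * measure lebesgue \<Omega> + 2 * C * measure lebesgue E
             + C * integral\<^sup>L (lebesgue_on E) (\<lambda>x. norm (u x) powr p)
             + C * integral\<^sup>L (lebesgue_on E) (\<lambda>x. norm (w x) powr p)"
proof -
  have \<Omega>s: "\<Omega> \<in> sets lebesgue" using \<Omega> by (simp add: fmeasurableD)
  have um: "u \<in> borel_measurable (lebesgue_on \<Omega>)" and wm: "w \<in> borel_measurable (lebesgue_on \<Omega>)"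
    using u w unfolding in_Lp_def by auto
  have E: "E \<in> sets lebesgue" "E \<subseteq> \<Omega>"
    unfolding E_def by (rule exceptional_set_lebesgue[OF \<Omega>s T um wm] exceptional_set_subset)+
  define g where "g x = 2 * C + C * norm (u x) powr p + C * norm (w x) powr p" for x
  have bound: "\<bar>F x (u x) - F x (w x)\<bar> \<le> g x" if "x \<in> \<Omega>" for x
    using growth[OF that, of "u x"] growth[OF that, of "w x"]
    unfolding g_def abs_le_iff distrib_left by linarith
  have "integrable (lebesgue_on \<Omega>) (\<lambda>x. F x (u x) - F x (w x))"
  proof (rule Bochner_Integration.integrable_bound)
    show "integrable (lebesgue_on \<Omega>) g"
      unfolding g_def using integrable_growth_majorant[OF \<Omega> \<Omega>s order.refl u w] .
    show "(\<lambda>x. F x (u x) - F x (w x)) \<in> borel_measurable (lebesgue_on \<Omega>)" using Fu Fw by measurable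
    show "AE x in lebesgue_on \<Omega>. norm (F x (u x) - F x (w x)) \<le> norm (g x)"
      using bound by (intro AE_I2) (simp add: order_trans[OF _ abs_ge_self])
  qed
  moreover have "integrable (lebesgue_on E) g"
    unfolding g_def using integrable_growth_majorant[OF \<Omega> E u w] .
  moreover have "\<bar>F x (u x) - F x (w x)\<bar> \<le> e" if "x \<in> \<Omega> - E" for x
    using that cont[of x "u x" "w x"] unfolding E_def exceptional_set_def by (auto simp: dist_norm)
  ultimately have "\<bar>\<integral>x. F x (u x) - F x (w x) \<partial>lebesgue_on \<Omega>\<bar>
      \<le> e * measure lebesgue \<Omega> + integral\<^sup>L (lebesgue_on E) g"
    using bound E by (intro integral_abs_le_outside_exceptional_set[OF \<Omega> E \<open>0 \<le> e\<close>]) auto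
  then show ?thesis
    unfolding g_def integral_growth_majorant[OF \<Omega> E u w] by simp
qed

lemma integral_diff_le_if_exceptional_set_small:
  fixes F :: "real^'n \<Rightarrow> real^'d \<Rightarrow> real" and u w :: "real^'n \<Rightarrow> real^'d"
  assumes \<Omega>: "\<Omega> \<in> lmeasurable" and T: "T \<in> sets lebesgue"
    and "0 < p" "0 \<le> C" "0 \<le> e"
    and u: "in_Lp \<Omega> p u" and w: "in_Lp \<Omega> p w"
    and Fu: "(\<lambda>x. F x (u x)) \<in> borel_measurable (lebesgue_on \<Omega>)"
    and Fw: "(\<lambda>x. F x (w x)) \<in> borel_measurable (lebesgue_on \<Omega>)"
    and growth: "\<And>x \<xi>. x \<in> \<Omega> \<Longrightarrow> 0 \<le> F x \<xi> \<and> F x \<xi> \<le> C * (1 + norm \<xi> powr p)"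
    and cont: "\<And>x \<xi> \<xi>'. x \<in> T \<Longrightarrow> norm \<xi> \<le> b \<Longrightarrow> norm \<xi>' \<le> b \<Longrightarrow> dist \<xi> \<xi>' < \<eta>
                 \<Longrightarrow> \<bar>F x \<xi> - F x \<xi>'\<bar> < e"
    and small: "measure lebesgue (\<Omega> - T) + measure lebesgue {x \<in> \<Omega>. b \<le> norm (u x)}
      + measure lebesgue {x \<in> \<Omega>. b \<le> norm (w x)} + measure lebesgue {x \<in> \<Omega>. \<eta> \<le> norm (u x - w x)} < \<delta>"
    and equi: "\<And>E. E \<in> sets lebesgue \<Longrightarrow> E \<subseteq> \<Omega> \<Longrightarrow> measure lebesgue E < \<delta> \<Longrightarrow>
                 integral\<^sup>L (lebesgue_on E) (\<lambda>x. norm (u x) powr p) < e'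
                 \<and> integral\<^sup>L (lebesgue_on E) (\<lambda>x. norm (w x) powr p) < e'"
  shows "\<bar>\<integral>x. F x (u x) - F x (w x) \<partial>lebesgue_on \<Omega>\<bar>
           \<le> e * measure lebesgue \<Omega> + 2 * C * \<delta> + 2 * C * e'"
proof -
  define E where "E = exceptional_set \<Omega> T b \<eta> u w"
  have \<Omega>s: "\<Omega> \<in> sets lebesgue" using \<Omega> by (simp add: fmeasurableD)
  have um: "u \<in> borel_measurable (lebesgue_on \<Omega>)" and wm: "w \<in> borel_measurable (lebesgue_on \<Omega>)"
    using u w unfolding in_Lp_def by auto
  have "measure lebesgue E < \<delta>"
    using measure_exceptional_set_le[OF \<Omega>s T um wm, where b = b and \<eta> = \<eta>] small
    unfolding E_def by linarith
  moreover have "E \<in> sets lebesgue" "E \<subseteq> \<Omega>"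
    unfolding E_def by (rule exceptional_set_lebesgue[OF \<Omega>s T um wm] exceptional_set_subset)+
  ultimately have "integral\<^sup>L (lebesgue_on E) (\<lambda>x. norm (u x) powr p) < e'"
    and "integral\<^sup>L (lebesgue_on E) (\<lambda>x. norm (w x) powr p) < e'"
    using equi by blast+
  then have "C * integral\<^sup>L (lebesgue_on E) (\<lambda>x. norm (u x) powr p) \<le> C * e'"
    and "C * integral\<^sup>L (lebesgue_on E) (\<lambda>x. norm (w x) powr p) \<le> C * e'"
    and "C * measure lebesgue E \<le> C * \<delta>"
    using \<open>measure lebesgue E < \<delta>\<close> \<open>0 \<le> C\<close> by (auto intro: mult_left_mono)
  moreover have "\<bar>\<integral>x. F x (u x) - F x (w x) \<partial>lebesgue_on \<Omega>\<bar>
      \<le> e * measure lebesgue \<Omega> + 2 * C * measure lebesgue E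
        + C * integral\<^sup>L (lebesgue_on E) (\<lambda>x. norm (u x) powr p)
        + C * integral\<^sup>L (lebesgue_on E) (\<lambda>x. norm (w x) powr p)"
    unfolding E_def
    by (rule integral_diff_le_exceptional_set[OF \<Omega> T assms(3-5) u w Fu Fw growth cont])
  ultimately show ?thesis by linarith
qed

lemma exceptional_sets_eventually_small:
  assumes \<Omega>: "\<Omega> \<in> sets lebesgue" "bounded \<Omega>" and "0 < p"
    and u: "\<forall>k. in_Lp \<Omega> p (u k)" "p_equiintegrable \<Omega> p u"
    and w: "\<forall>k. in_Lp \<Omega> p (w k)" "p_equiintegrable \<Omega> p w"
    and lim: "(\<lambda>k. Lp_norm \<Omega> p (\<lambda>x. u k x - w k x)) \<longlonglongrightarrow> 0" and "0 < \<delta>"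
  obtains b where "\<And>\<eta>. 0 < \<eta> \<Longrightarrow> \<forall>\<^sub>F k in sequentially.
      measure lebesgue {x \<in> \<Omega>. b \<le> norm (u k x)} + measure lebesgue {x \<in> \<Omega>. b \<le> norm (w k x)}
      + measure lebesgue {x \<in> \<Omega>. \<eta> \<le> norm (u k x - w k x)} < \<delta>"
proof -
  have "0 < \<delta> / 3" using \<open>0 < \<delta>\<close> by simp
  obtain bu where bu: "\<And>k b. bu \<le> b \<Longrightarrow> measure lebesgue {x \<in> \<Omega>. b \<le> norm (u k x)} < \<delta> / 3"
    by (rule p_equiintegrable_tight[OF \<Omega> \<open>0 < p\<close> u \<open>0 < \<delta> / 3\<close>]) blast
  obtain bw where bw: "\<And>k b. bw \<le> b \<Longrightarrow> measure lebesgue {x \<in> \<Omega>. b \<le> norm (w k x)} < \<delta> / 3"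
    by (rule p_equiintegrable_tight[OF \<Omega> \<open>0 < p\<close> w \<open>0 < \<delta> / 3\<close>]) blast
  have "\<forall>\<^sub>F k in sequentially.
      measure lebesgue {x \<in> \<Omega>. max bu bw \<le> norm (u k x)} + measure lebesgue {x \<in> \<Omega>. max bu bw \<le> norm (w k x)}
      + measure lebesgue {x \<in> \<Omega>. \<eta> \<le> norm (u k x - w k x)} < \<delta>" if "0 < \<eta>" for \<eta>
  proof -
    have "(\<lambda>k. measure lebesgue {x \<in> \<Omega>. \<eta> \<le> norm (u k x - w k x)}) \<longlonglongrightarrow> 0"
      using Lp_norm_tendsto_zero_imp_tendsto_in_measure[OF \<Omega>(1) \<open>0 < p\<close> _ lim \<open>0 < \<eta>\<close>]
        in_Lp_diff u(1) w(1) \<open>0 < p\<close> by blast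
    then have "\<forall>\<^sub>F k in sequentially. measure lebesgue {x \<in> \<Omega>. \<eta> \<le> norm (u k x - w k x)} < \<delta> / 3"
      using \<open>0 < \<delta> / 3\<close> by (rule order_tendstoD(2))
    then show ?thesis
    proof (rule eventually_mono)
      fix k
      have "measure lebesgue {x \<in> \<Omega>. max bu bw \<le> norm (u k x)} < \<delta> / 3" by (rule bu) simp
      moreover have "measure lebesgue {x \<in> \<Omega>. max bu bw \<le> norm (w k x)} < \<delta> / 3" by (rule bw) simp
      ultimately show "measure lebesgue {x \<in> \<Omega>. \<eta> \<le> norm (u k x - w k x)} < \<delta> / 3 \<Longrightarrow>
          measure lebesgue {x \<in> \<Omega>. max bu bw \<le> norm (u k x)}
          + measure lebesgue {x \<in> \<Omega>. max bu bw \<le> norm (w k x)}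
          + measure lebesgue {x \<in> \<Omega>. \<eta> \<le> norm (u k x - w k x)} < \<delta>"
        by linarith
    qed
  qed
  then show thesis using that by blast
qed

lemma integral_diff_tendsto_zero_if_equicontinuous:
  fixes F :: "nat \<Rightarrow> real^'n \<Rightarrow> real^'d \<Rightarrow> real" and u w :: "nat \<Rightarrow> real^'n \<Rightarrow> real^'d"
  assumes \<Omega>: "\<Omega> \<in> lmeasurable" "bounded \<Omega>" and "0 < p" "0 < C"
    and F_meas: "\<And>k v. v \<in> borel_measurable (lebesgue_on \<Omega>)
                   \<Longrightarrow> (\<lambda>x. F k x (v x)) \<in> borel_measurable (lebesgue_on \<Omega>)"
    and growth: "\<And>k x \<xi>. x \<in> \<Omega> \<Longrightarrow> 0 \<le> F k x \<xi> \<and> F k x \<xi> \<le> C * (1 + norm \<xi> powr p)"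
    and equicont: "\<And>K b e. compact K \<Longrightarrow> K \<subseteq> \<Omega> \<Longrightarrow> 0 < e \<Longrightarrow> \<exists>\<eta>>0. \<forall>k x \<xi> \<xi>'.
                     x \<in> K \<longrightarrow> norm \<xi> \<le> b \<longrightarrow> norm \<xi>' \<le> b \<longrightarrow> dist \<xi> \<xi>' < \<eta>
                     \<longrightarrow> \<bar>F k x \<xi> - F k x \<xi>'\<bar> < e"
    and u: "\<forall>k. in_Lp \<Omega> p (u k)" "p_equiintegrable \<Omega> p u"
    and w: "\<forall>k. in_Lp \<Omega> p (w k)" "p_equiintegrable \<Omega> p w"
    and lim: "(\<lambda>k. Lp_norm \<Omega> p (\<lambda>x. u k x - w k x)) \<longlonglongrightarrow> 0"
  shows "(\<lambda>k. \<integral>x. F k x (u k x) - F k x (w k x) \<partial>lebesgue_on \<Omega>) \<longlonglongrightarrow> 0"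
proof (rule tendsto_iff[THEN iffD2], intro allI impI)
  fix r :: real assume "0 < r"
  have \<Omega>s: "\<Omega> \<in> sets lebesgue" using \<Omega>(1) by (simp add: fmeasurableD)
  \<comment> \<open>Each of the three terms of the bound e |\<Omega>| + 2 C \<delta> + 2 C e' will be at most r/4.\<close>
  define \<mu> where "\<mu> = measure lebesgue \<Omega>"
  define e where "e = r / (4 * (\<mu> + 1))"
  have "0 \<le> \<mu>" by (simp add: \<mu>_def)
  then have "0 < e" "e * \<mu> \<le> r / 4" using \<open>0 < r\<close> by (auto simp: e_def field_simps)
  define e' where "e' = r / (8 * C)"
  have "0 < e'" using \<open>0 < r\<close> \<open>0 < C\<close> by (simp add: e'_def)
  obtain \<delta>0 where "0 < \<delta>0" and equi0: "\<And>E k. E \<in> sets lebesgue \<Longrightarrow> E \<subseteq> \<Omega> \<Longrightarrow> measure lebesgue E < \<delta>0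
      \<Longrightarrow> integral\<^sup>L (lebesgue_on E) (\<lambda>x. norm (u k x) powr p) < e'
        \<and> integral\<^sup>L (lebesgue_on E) (\<lambda>x. norm (w k x) powr p) < e'"
    using p_equiintegrable_common_delta[OF u(2) w(2) \<open>0 < e'\<close>] by blast
  define \<delta> where "\<delta> = min \<delta>0 e'"
  have "0 < \<delta> / 2" "\<delta> \<le> e'" using \<open>0 < \<delta>0\<close> \<open>0 < e'\<close> by (auto simp: \<delta>_def)
  have equi: "\<And>E k. E \<in> sets lebesgue \<Longrightarrow> E \<subseteq> \<Omega> \<Longrightarrow> measure lebesgue E < \<delta>
      \<Longrightarrow> integral\<^sup>L (lebesgue_on E) (\<lambda>x. norm (u k x) powr p) < e'
        \<and> integral\<^sup>L (lebesgue_on E) (\<lambda>x. norm (w k x) powr p) < e'"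
    using equi0 by (simp add: \<delta>_def)
  obtain T where "compact T" "T \<subseteq> \<Omega>" and T_small: "measure lebesgue (\<Omega> - T) < \<delta> / 2"
    using lebesgue_inner_compact[OF \<Omega>s \<Omega>(2) \<open>0 < \<delta> / 2\<close>] by blast
  then have "T \<in> sets lebesgue" by (simp add: lmeasurable_compact fmeasurableD)
  obtain b where b: "\<And>\<eta>. 0 < \<eta> \<Longrightarrow> \<forall>\<^sub>F k in sequentially.
      measure lebesgue {x \<in> \<Omega>. b \<le> norm (u k x)} + measure lebesgue {x \<in> \<Omega>. b \<le> norm (w k x)}
      + measure lebesgue {x \<in> \<Omega>. \<eta> \<le> norm (u k x - w k x)} < \<delta> / 2"
    by (rule exceptional_sets_eventually_small[OF \<Omega>s \<Omega>(2) \<open>0 < p\<close> u w lim \<open>0 < \<delta> / 2\<close>]) blast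
  obtain \<eta> where "0 < \<eta>" and cont: "\<forall>k x \<xi> \<xi>'. x \<in> T \<longrightarrow> norm \<xi> \<le> b \<longrightarrow> norm \<xi>' \<le> b
      \<longrightarrow> dist \<xi> \<xi>' < \<eta> \<longrightarrow> \<bar>F k x \<xi> - F k x \<xi>'\<bar> < e"
    using equicont[OF \<open>compact T\<close> \<open>T \<subseteq> \<Omega>\<close> \<open>0 < e\<close>, of b] by (elim exE conjE)
  show "\<forall>\<^sub>F k in sequentially. dist (\<integral>x. F k x (u k x) - F k x (w k x) \<partial>lebesgue_on \<Omega>) 0 < r"
    using b[OF \<open>0 < \<eta>\<close>]
  proof (rule eventually_mono)
    fix k
    assume "measure lebesgue {x \<in> \<Omega>. b \<le> norm (u k x)} + measure lebesgue {x \<in> \<Omega>. b \<le> norm (w k x)}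
      + measure lebesgue {x \<in> \<Omega>. \<eta> \<le> norm (u k x - w k x)} < \<delta> / 2"
    with T_small have small: "measure lebesgue (\<Omega> - T) + measure lebesgue {x \<in> \<Omega>. b \<le> norm (u k x)}
      + measure lebesgue {x \<in> \<Omega>. b \<le> norm (w k x)} + measure lebesgue {x \<in> \<Omega>. \<eta> \<le> norm (u k x - w k x)} < \<delta>"
      by linarith
    have meas: "(\<lambda>x. F k x (v x)) \<in> borel_measurable (lebesgue_on \<Omega>)" if "in_Lp \<Omega> p v" for v
      using F_meas that unfolding in_Lp_def by blast
    have "\<bar>\<integral>x. F k x (u k x) - F k x (w k x) \<partial>lebesgue_on \<Omega>\<bar>
        \<le> e * measure lebesgue \<Omega> + 2 * C * \<delta> + 2 * C * e'"
      by (rule integral_diff_le_if_exceptional_set_small[OF \<Omega>(1) \<open>T \<in> sets lebesgue\<close> \<open>0 < p\<close>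
            less_imp_le[OF \<open>0 < C\<close>] less_imp_le[OF \<open>0 < e\<close>] u(1)[rule_format] w(1)[rule_format]
            meas[OF u(1)[rule_format]] meas[OF w(1)[rule_format]] growth cont[rule_format] small equi])
    moreover have "2 * C * \<delta> \<le> r / 4" "2 * C * e' = r / 4"
      using \<open>\<delta> \<le> e'\<close> \<open>0 < C\<close> by (auto simp: e'_def field_simps)
    ultimately show "dist (\<integral>x. F k x (u k x) - F k x (w k x) \<partial>lebesgue_on \<Omega>) 0 < r"
      using \<open>e * \<mu> \<le> r / 4\<close> \<open>0 < r\<close> unfolding \<mu>_def dist_real_def by linarith
  qed
qed

theorem lemma4p2:
  fixes \<Omega> :: "(real^'n) set" and Y :: "(real^'m) set"
    and R :: "real^'n^'m" and p C :: real
    and f :: "real^'n \<Rightarrow> real^'m \<Rightarrow> real^'d \<Rightarrow> real"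
    and eps :: "nat \<Rightarrow> real" and u w :: "nat \<Rightarrow> real^'n \<Rightarrow> real^'d"
  assumes "open \<Omega>" and "bounded \<Omega>"
    and "CARD('m) > CARD('n)"
    and "is_parallelotope Y"
    and "1 < p"
    and "\<forall>k::real^'m. (\<forall>i. k$i \<in> \<int>) \<and> k \<noteq> 0 \<longrightarrow> transpose R *v k \<noteq> 0"
    and "continuous_on (\<Omega> \<times> UNIV \<times> UNIV) (\<lambda>(x, z, \<xi>). f x z \<xi>)"
    and "\<forall>x\<in>\<Omega>. \<forall>z \<xi>. 0 \<le> f x z \<xi>"
    and "\<forall>x\<in>\<Omega>. \<forall>\<xi>. periodic_wrt Y (\<lambda>z. f x z \<xi>)"
    and "C > 0"
    and "\<forall>x\<in>\<Omega>. \<forall>z \<xi>. 0 \<le> f x (R *v z) \<xi> \<and> f x (R *v z) \<xi> \<le> C * (1 + norm \<xi> powr p)"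
    and "\<forall>k. eps k > 0" and "eps \<longlonglongrightarrow> 0"
    and "\<forall>k. in_Lp \<Omega> p (u k)" and "\<forall>k. in_Lp \<Omega> p (w k)"
    and "p_equiintegrable \<Omega> p u" and "p_equiintegrable \<Omega> p w"
    and "(\<lambda>k. Lp_norm \<Omega> p (\<lambda>x. u k x - w k x)) \<longlonglongrightarrow> 0"
  shows "(\<lambda>k. integral\<^sup>L (lebesgue_on \<Omega>)
            (\<lambda>x. f x (R *v ((1 / eps k) *\<^sub>R x)) (u k x)
               - f x (R *v ((1 / eps k) *\<^sub>R x)) (w k x))) \<longlonglongrightarrow> 0"
proof -
  have \<Omega>: "\<Omega> \<in> lmeasurable" using lmeasurable_open assms(1,2) by blast
  have "0 < p" using assms(5) by simp
  have meas: "(\<lambda>x. f x (R *v ((1 / eps k) *\<^sub>R x)) (v x)) \<in> borel_measurable (lebesgue_on \<Omega>)"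
    if "v \<in> borel_measurable (lebesgue_on \<Omega>)" for k v
  proof (rule continuous_compose_borel_measurable_lebesgue_on[OF assms(1,7) _ that])
    show "(\<lambda>x. R *v ((1 / eps k) *\<^sub>R x)) \<in> borel_measurable (lebesgue_on \<Omega>)"
      using assms(1)
      by (intro continuous_imp_measurable_on_sets_lebesgue continuous_intros
            bounded_linear.continuous_on[OF matrix_vector_mul_bounded_linear]) auto
  qed
  have growth: "0 \<le> f x (R *v ((1 / eps k) *\<^sub>R x)) \<xi>
      \<and> f x (R *v ((1 / eps k) *\<^sub>R x)) \<xi> \<le> C * (1 + norm \<xi> powr p)" if "x \<in> \<Omega>" for k x \<xi>
    using assms(11) that by blast
  have equicont: "\<exists>\<eta>>0. \<forall>k x \<xi> \<xi>'. x \<in> K \<longrightarrow> norm \<xi> \<le> b \<longrightarrow> norm \<xi>' \<le> b \<longrightarrow> dist \<xi> \<xi>' < \<eta>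
      \<longrightarrow> \<bar>f x (R *v ((1 / eps k) *\<^sub>R x)) \<xi> - f x (R *v ((1 / eps k) *\<^sub>R x)) \<xi>'\<bar> < e"
    if K: "compact K" "K \<subseteq> \<Omega>" "0 < e" for K b e
  proof -
    obtain \<eta> where "0 < \<eta>" and "\<And>x z \<xi> \<xi>'. x \<in> K \<Longrightarrow> norm \<xi> \<le> b \<Longrightarrow> norm \<xi>' \<le> b
        \<Longrightarrow> dist \<xi> \<xi>' < \<eta> \<Longrightarrow> \<bar>f x z \<xi> - f x z \<xi>'\<bar> < e"
      by (rule periodic_uniformly_continuous_last_arg[where b = b, OF assms(4,7,9) K]) blast
    then show ?thesis by blast
  qed
  show ?thesis
    by (rule integral_diff_tendsto_zero_if_equicontinuous[where F = "\<lambda>k x. f x (R *v ((1 / eps k) *\<^sub>R x))",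
          OF \<Omega> assms(2) \<open>0 < p\<close> assms(10) meas growth equicont assms(14,16,15,17,18)])
qed

end
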